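(* Let $n\ge 3$, let the sites of an $n$-qubit chain be partitioned into nonempty consecutive intervals $L=\{1,\dots,a\}$, $C=\{a+1,\dots,a+k\}$, $R=\{a+k+1,\dots,n\}$, and let $W\in\mathrm{Sp}(2n,\mathbb{Z}_2)$ be the symplectic matrix of a Clifford unitary $U$ on the chain. Then $W$ satisfies the left wall condition around $C$ if and only if it satisfies the right wall condition around $C$. (All walls in Clifford circuits are two-sided.)
   Context: Pauli operators modulo phases are identified with $\mathbb{Z}_2^{2n}$ via $(p_1,q_1,\dots,p_n,q_n)\mapsto X^{p_1}Z^{q_1}\otimes\cdots\otimes X^{p_n}Z^{q_n}$; the symplectic form is $J=\bigoplus_{i=1}^n\begin{pmatrix}0&1\\1&0\end{pmatrix}$ (two Paulis commute iff $b^TJb'=0$), $\mathrm{Sp}(2n,\mathbb{Z}_2)=\{S:SJS^T=J\}$, and a Clifford unitary $U$ induces $W$ with $UP_bU^\dagger\propto P_{Wb}$. For a set of sites $S$, $V_S$ is the subspace of vectors supported on $S$, so $\mathbb{Z}_2^{2n}=V_L\oplus V_C\oplus V_R$, vectors written $(l,c,r)$. Left wall condition: for all integers $t\ge1$ and all $l\in V_L$, $W^t(l,0,0)\in V_L\oplus V_C\oplus\{0\}$. Right wall condition: for all integers $t\ge 1$ and all $r\in V_R$, $W^t(0,0,r)\in\{0\}\oplus V_C\oplus V_R$. *)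

theory Defs
  imports Main "HOL-Library.Z2"
begin

(* Vectors of Z_2^{2n} are functions nat => bit; coordinates 0..2n-1 (0-based).
   Coordinates 2(i-1) and 2(i-1)+1 are the (p_i, q_i) of site i (sites 1..n).
   Matrices are nat => nat => bit, only entries with indices < 2n are used. *)

definition site :: "nat \<Rightarrow> nat" where
  "site j = j div 2 + 1"

definition symp_J :: "nat \<Rightarrow> nat \<Rightarrow> nat \<Rightarrow> bit" where
  "symp_J n i j = (if i < 2*n \<and> j < 2*n \<and> i div 2 = j div 2 \<and> i \<noteq> j then 1 else 0)"

definition is_symplectic :: "nat \<Rightarrow> (nat \<Rightarrow> nat \<Rightarrow> bit) \<Rightarrow> bool" where
  "is_symplectic n W \<longleftrightarrow>
     (\<forall>i<2*n. \<forall>j<2*n.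
        (\<Sum>p<2*n. \<Sum>q<2*n. W i p * symp_J n p q * W j q) = symp_J n i j)"

definition mat_vec :: "nat \<Rightarrow> (nat \<Rightarrow> nat \<Rightarrow> bit) \<Rightarrow> (nat \<Rightarrow> bit) \<Rightarrow> (nat \<Rightarrow> bit)" where
  "mat_vec n W v = (\<lambda>i. if i < 2*n then (\<Sum>j<2*n. W i j * v j) else 0)"

definition supp_space :: "nat \<Rightarrow> nat set \<Rightarrow> (nat \<Rightarrow> bit) set" where
  "supp_space n S = {v. \<forall>j. v j \<noteq> 0 \<longrightarrow> j < 2*n \<and> site j \<in> S}"

definition left_wall :: "nat \<Rightarrow> (nat \<Rightarrow> nat \<Rightarrow> bit) \<Rightarrow> nat set \<Rightarrow> nat set \<Rightarrow> bool" where
  "left_wall n W L C \<longleftrightarrow>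
     (\<forall>t::nat. t \<ge> 1 \<longrightarrow> (\<forall>l \<in> supp_space n L.
        (mat_vec n W ^^ t) l \<in> supp_space n (L \<union> C)))"

definition right_wall :: "nat \<Rightarrow> (nat \<Rightarrow> nat \<Rightarrow> bit) \<Rightarrow> nat set \<Rightarrow> nat set \<Rightarrow> bool" where
  "right_wall n W C R \<longleftrightarrow>
     (\<forall>t::nat. t \<ge> 1 \<longrightarrow> (\<forall>r \<in> supp_space n R.
        (mat_vec n W ^^ t) r \<in> supp_space n (C \<union> R)))"

end

theory Submission
  imports Defs "HOL-Combinatorics.Orbits"
begin

text \<open>
  The symplectic form \<open>\<omega>(x, y) = x\<^sup>T J y\<close> turns supports into orthogonality: a vector
  is supported on \<open>L \<union> C\<close> iff it is \<open>\<omega>\<close>-orthogonal to \<open>V\<^sub>R\<close>, and on \<open>C \<union> R\<close> iff it is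
  orthogonal to \<open>V\<^sub>L\<close>. The \<open>\<omega>\<close>-adjoint of \<open>W\<close> is \<open>J W\<^sup>T J = W\<^sup>-\<^sup>1\<close>, so the left wall
  condition \<open>\<omega>(W\<^sup>t l, r) = 0\<close> is the right wall condition \<open>\<omega>(l, W\<^sup>-\<^sup>t r) = 0\<close> for
  \<open>W\<^sup>-\<^sup>1\<close>. Finally, \<open>W\<close> permutes the finite set \<open>\<int>\<^sub>2\<^sup>2\<^sup>n\<close>, so every vector has the same
  forward orbit under \<open>W\<^sup>-\<^sup>1\<close> as under \<open>W\<close>.
\<close>

text \<open>The simp rules of \<open>Z2\<close> rewrite bit products and sums into bitwise operations,
  which defeats ring normalisation of the matrix sums below.\<close>

declare mult_bit_eq_and [simp del] add_bit_eq_xor [simp del]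

lemma orbit_eq_orbit_of_right_inverse:
  assumes "finite V" "f \<in> V \<rightarrow> V" "g \<in> V \<rightarrow> V" "\<And>y. y \<in> V \<Longrightarrow> f (g y) = y" "x \<in> V"
  shows "orbit g x = orbit f x"
proof -
  define p where "p y = (if y \<in> V then f y else y)" for y
  have "V \<subseteq> f ` V"
    using assms(3,4) by (metis Pi_mem image_eqI subsetI)
  then have "bij_betw f V V"
    using assms(1,2) by (metis bij_betw_def finite_surj_inj image_subset_iff_funcset subset_antisym)
  then have "bij_betw p V V"
    by (rule bij_betw_cong[THEN iffD1, rotated]) (simp add: p_def)
  then have p: "p permutes V"
    by (rule bij_imp_permutes) (simp add: p_def)
  have "inv p y = g y" if "y \<in> V" for y
    using that assms(3,4) by (auto simp: permutes_inv_eq[OF p] p_def)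
  then have "orbit g x = orbit (inv p) x"
    using assms(3,5) by (intro orbit_cong0) auto
  also have "\<dots> = orbit p x"
    using p assms(1) by (intro orbit_inv_eq permutation_permutes[THEN iffD2]) blast
  also have "\<dots> = orbit f x"
    using assms(2,5) by (intro orbit_cong0[of x V]) (auto simp: p_def)
  finally show ?thesis .
qed

lemma funpow_pos_in_iff_orbit_subset:
  "(\<forall>t::nat. t \<ge> 1 \<longrightarrow> (f ^^ t) x \<in> S) \<longleftrightarrow> orbit f x \<subseteq> S"
  unfolding orbit_altdef One_nat_def Suc_le_eq by blast

definition partner :: "nat \<Rightarrow> nat" where
  "partner i = (if even i then Suc i else i - 1)"

lemma partner_partner [simp]: "partner (partner i) = i"
  unfolding partner_def by (cases i) auto

lemma partner_eq_iff: "partner i = partner j \<longleftrightarrow> i = j"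
  by (metis partner_partner)

lemma partner_less [simp]: "i < 2 * n \<Longrightarrow> partner i < 2 * n"
  unfolding partner_def by (auto elim!: evenE)

lemma site_partner [simp]: "site (partner i) = site i"
  unfolding partner_def site_def by (auto elim!: evenE oddE)

lemma symp_J_eq: "i < 2 * n \<Longrightarrow> q < 2 * n \<Longrightarrow> symp_J n i q = (if q = partner i then 1 else 0)"
  unfolding symp_J_def partner_def by (auto elim!: evenE oddE)

lemma sum_symp_J_mult:
  assumes "i < 2 * n"
  shows "(\<Sum>q<2 * n. symp_J n i q * y q) = y (partner i)"
proof -
  have "(\<Sum>q<2 * n. symp_J n i q * y q) = (\<Sum>q<2 * n. if q = partner i then y q else 0)"
    using assms by (intro sum.cong) (auto simp: symp_J_eq)
  also have "\<dots> = y (partner i)"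
    using assms by (simp add: sum.delta')
  finally show ?thesis .
qed

definition symp_form :: "nat \<Rightarrow> (nat \<Rightarrow> bit) \<Rightarrow> (nat \<Rightarrow> bit) \<Rightarrow> bit" where
  "symp_form n x y = (\<Sum>p<2 * n. x p * y (partner p))"

text \<open>The matrix \<open>J W\<^sup>T J\<close>, adjoint to \<open>W\<close> for \<open>symp_form\<close>.\<close>

definition symp_adj :: "nat \<Rightarrow> (nat \<Rightarrow> nat \<Rightarrow> bit) \<Rightarrow> (nat \<Rightarrow> bit) \<Rightarrow> (nat \<Rightarrow> bit)" where
  "symp_adj n W y = (\<lambda>j. if j < 2 * n then (\<Sum>q<2 * n. W q (partner j) * y (partner q)) else 0)"

lemma symp_form_commute: "symp_form n x y = symp_form n y x"
  unfolding symp_form_def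
  by (rule sum.reindex_bij_witness[where i = partner and j = partner]) (auto simp: mult.commute[of "y _"])

lemma symp_form_mat_vec: "symp_form n (mat_vec n W x) y = symp_form n x (symp_adj n W y)"
proof -
  have "symp_form n (mat_vec n W x) y = (\<Sum>p<2 * n. \<Sum>j<2 * n. W p j * x j * y (partner p))"
    unfolding symp_form_def mat_vec_def
    by (simp add: sum_distrib_right)
  also have "\<dots> = (\<Sum>j<2 * n. \<Sum>p<2 * n. W p j * x j * y (partner p))"
    by (rule sum.swap)
  also have "\<dots> = symp_form n x (symp_adj n W y)"
    unfolding symp_form_def symp_adj_def
    by (simp add: sum_distrib_left) (simp add: mult_ac)
  finally show ?thesis .
qed

lemma symp_form_funpow_mat_vec:
  "symp_form n ((mat_vec n W ^^ t) x) y = symp_form n x ((symp_adj n W ^^ t) y)"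
proof (induction t arbitrary: x y)
  case (Suc t)
  have "symp_form n ((mat_vec n W ^^ Suc t) x) y = symp_form n ((mat_vec n W ^^ t) (mat_vec n W x)) y"
    by (simp only: funpow_Suc_right o_apply)
  also have "\<dots> = symp_form n x (symp_adj n W ((symp_adj n W ^^ t) y))"
    by (simp only: Suc symp_form_mat_vec)
  finally show ?case
    by simp
qed simp

lemma is_symplectic_rows:
  assumes "is_symplectic n W" "i < 2 * n" "j < 2 * n"
  shows "(\<Sum>p<2 * n. W i p * W j (partner p)) = symp_J n i j"
proof -
  have "(\<Sum>p<2 * n. W i p * W j (partner p)) = (\<Sum>p<2 * n. \<Sum>q<2 * n. W i p * symp_J n p q * W j q)"
    by (simp add: mult.assoc sum_symp_J_mult flip: sum_distrib_left)
  also have "\<dots> = symp_J n i j"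
    using assms unfolding is_symplectic_def by blast
  finally show ?thesis .
qed

definition pauli_space :: "nat \<Rightarrow> (nat \<Rightarrow> bit) set" where
  "pauli_space n = {v. \<forall>j \<ge> 2 * n. v j = 0}"

lemma site_in_range: "j < 2 * n \<Longrightarrow> site j \<in> {1..n}"
  unfolding site_def by auto

lemma supp_space_subset_pauli_space: "supp_space n S \<subseteq> pauli_space n"
  unfolding supp_space_def pauli_space_def by (auto simp: not_less[symmetric])

lemma mat_vec_in_pauli_space: "mat_vec n W x \<in> pauli_space n"
  unfolding pauli_space_def mat_vec_def by simp

lemma symp_adj_in_pauli_space: "symp_adj n W x \<in> pauli_space n"
  unfolding pauli_space_def symp_adj_def by simp

lemma finite_pauli_space: "finite (pauli_space n)"
proof -
  have "finite {v :: nat \<Rightarrow> bit. \<forall>j. (j \<in> {..<2 * n} \<longrightarrow> v j \<in> {0, 1}) \<and> (j \<notin> {..<2 * n} \<longrightarrow> v j = 0)}"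
    by (rule finite_set_of_finite_funs) auto
  then show ?thesis
    by (rule finite_subset[rotated]) (auto simp: pauli_space_def)
qed

lemma mat_vec_symp_adj:
  assumes W: "is_symplectic n W" and y: "y \<in> pauli_space n"
  shows "mat_vec n W (symp_adj n W y) = y"
proof
  fix i
  show "mat_vec n W (symp_adj n W y) i = y i"
  proof (cases "i < 2 * n")
    case False
    then show ?thesis using y unfolding pauli_space_def mat_vec_def by simp
  next
    case i: True
    have "mat_vec n W (symp_adj n W y) i = (\<Sum>j<2 * n. \<Sum>q<2 * n. W i j * W q (partner j) * y (partner q))"
      unfolding mat_vec_def symp_adj_def using i by (simp add: sum_distrib_left mult.assoc)
    also have "\<dots> = (\<Sum>q<2 * n. (\<Sum>j<2 * n. W i j * W q (partner j)) * y (partner q))"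
      by (subst sum.swap) (simp add: sum_distrib_right)
    also have "\<dots> = (\<Sum>q<2 * n. symp_J n i q * y (partner q))"
      using is_symplectic_rows[OF W i] by simp
    also have "\<dots> = y i"
      using sum_symp_J_mult[OF i] by simp
    finally show ?thesis .
  qed
qed

lemma supp_space_iff_symp_orthogonal:
  assumes "{1..n} \<subseteq> A \<union> B" "A \<inter> B = {}" and v: "v \<in> pauli_space n"
  shows "v \<in> supp_space n B \<longleftrightarrow> (\<forall>r \<in> supp_space n A. symp_form n v r = 0)"
proof
  assume vB: "v \<in> supp_space n B"
  show "\<forall>r \<in> supp_space n A. symp_form n v r = 0"
  proof
    fix r assume rA: "r \<in> supp_space n A"
    have "v p * r (partner p) = 0" for p
    proof (cases "v p = 0")
      case False
      then have "site p \<in> B"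
        using vB unfolding supp_space_def by blast
      then have "site (partner p) \<notin> A"
        using assms(2) by auto
      then have "r (partner p) = 0"
        using rA unfolding supp_space_def by blast
      then show ?thesis
        by simp
    qed simp
    then show "symp_form n v r = 0"
      unfolding symp_form_def by (intro sum.neutral) blast
  qed
next
  assume orth: "\<forall>r \<in> supp_space n A. symp_form n v r = 0"
  show "v \<in> supp_space n B"
    unfolding supp_space_def
  proof (intro CollectI allI impI)
    fix j assume vj: "v j \<noteq> 0"
    then have j: "j < 2 * n"
      using v unfolding pauli_space_def by (auto simp: not_less[symmetric])
    have "site j \<in> B"
    proof (rule ccontr)
      assume "site j \<notin> B"
      then have "site j \<in> A"
        using site_in_range[OF j] assms(1) by blast
      define e :: "nat \<Rightarrow> bit" where "e i = (if i = partner j then 1 else 0)" for i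
      have "e \<in> supp_space n A"
        unfolding supp_space_def e_def using j \<open>site j \<in> A\<close> by auto
      then have "symp_form n v e = 0"
        using orth by blast
      moreover have "symp_form n v e = (\<Sum>p<2 * n. if p = j then v p else 0)"
        unfolding symp_form_def e_def by (intro sum.cong refl) (auto simp: partner_eq_iff)
      ultimately show False
        using vj j by (simp add: sum.delta')
    qed
    then show "j < 2 * n \<and> site j \<in> B"
      using j by blast
  qed
qed

lemma left_wall_iff_adjoint_orbits:
  assumes "{1..n} \<subseteq> L \<union> C \<union> R" "L \<inter> C = {}" "L \<inter> R = {}" "C \<inter> R = {}"
  shows "left_wall n W L C \<longleftrightarrow>
    (\<forall>r \<in> supp_space n R. orbit (symp_adj n W) r \<subseteq> supp_space n (C \<union> R))"
proof -
  have funpow_in: "(h ^^ t) x \<in> pauli_space n"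
    if "\<And>x. h x \<in> pauli_space n" "t \<ge> 1" for h :: "(nat \<Rightarrow> bit) \<Rightarrow> nat \<Rightarrow> bit" and t x
    using that by (cases t) auto
  have LC_orth: "(mat_vec n W ^^ t) l \<in> supp_space n (L \<union> C) \<longleftrightarrow>
      (\<forall>r \<in> supp_space n R. symp_form n ((mat_vec n W ^^ t) l) r = 0)" if "t \<ge> 1" for t l
    by (rule supp_space_iff_symp_orthogonal) (use assms mat_vec_in_pauli_space funpow_in that in auto)
  have CR_orth: "(symp_adj n W ^^ t) r \<in> supp_space n (C \<union> R) \<longleftrightarrow>
      (\<forall>l \<in> supp_space n L. symp_form n ((symp_adj n W ^^ t) r) l = 0)" if "t \<ge> 1" for t r
    by (rule supp_space_iff_symp_orthogonal) (use assms symp_adj_in_pauli_space funpow_in that in auto)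
  have "left_wall n W L C \<longleftrightarrow> (\<forall>t::nat. t \<ge> 1 \<longrightarrow> (\<forall>l \<in> supp_space n L. \<forall>r \<in> supp_space n R.
      symp_form n ((mat_vec n W ^^ t) l) r = 0))"
    unfolding left_wall_def using LC_orth by blast
  also have "\<dots> \<longleftrightarrow> (\<forall>t::nat. t \<ge> 1 \<longrightarrow> (\<forall>r \<in> supp_space n R. \<forall>l \<in> supp_space n L.
      symp_form n ((symp_adj n W ^^ t) r) l = 0))"
    unfolding symp_form_funpow_mat_vec by (metis symp_form_commute)
  also have "\<dots> \<longleftrightarrow> (\<forall>r \<in> supp_space n R. orbit (symp_adj n W) r \<subseteq> supp_space n (C \<union> R))"
    unfolding funpow_pos_in_iff_orbit_subset[symmetric] using CR_orth by blast
  finally show ?thesis .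
qed

theorem left_wall_iff_right_wall:
  assumes W: "is_symplectic n W"
    and "{1..n} \<subseteq> L \<union> C \<union> R" "L \<inter> C = {}" "L \<inter> R = {}" "C \<inter> R = {}"
  shows "left_wall n W L C \<longleftrightarrow> right_wall n W C R"
proof -
  have "orbit (symp_adj n W) r = orbit (mat_vec n W) r" if "r \<in> supp_space n R" for r
    using finite_pauli_space mat_vec_in_pauli_space symp_adj_in_pauli_space mat_vec_symp_adj[OF W]
      supp_space_subset_pauli_space that
    by (intro orbit_eq_orbit_of_right_inverse[of "pauli_space n"]) blast+
  then show ?thesis
    unfolding left_wall_iff_adjoint_orbits[OF assms(2-)] right_wall_def
    by (auto simp flip: funpow_pos_in_iff_orbit_subset)
qed

theorem lemma3:
  fixes n a k :: nat and W :: "nat \<Rightarrow> nat \<Rightarrow> bit"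
  assumes "n \<ge> 3" and "a \<ge> 1" and "k \<ge> 1" and "a + k < n"
    and "is_symplectic n W"
  shows "left_wall n W {1..a} {a+1..a+k} \<longleftrightarrow> right_wall n W {a+1..a+k} {a+k+1..n}"
  by (rule left_wall_iff_right_wall[OF assms(5)]) auto

end
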